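(* For every integer $n\ge0$, the formal power series $\left(\frac{x^2}{1-x}\right)^n\in\mathbb{C}[[x]]$ is symplectic.
   Context: A formal power series $\varphi(x)=\sum_{i\ge0}\gamma_i x^i\in\mathbb{C}[[x]]$ is called symplectic if for every $m\ge1$ one has $\sum_{k=0}^{m-1}(-1)^k\binom{m-1}{k}\gamma_{m+k}=0$. *)

theory Defs
  imports "HOL-Computational_Algebra.Formal_Power_Series"
begin

definition symplectic :: "complex fps \<Rightarrow> bool" where
  "symplectic \<phi> \<longleftrightarrow>
     (\<forall>m::nat. m \<ge> 1 \<longrightarrow>
        (\<Sum>k = 0..m-1. (-1) ^ k * of_nat ((m-1) choose k) * fps_nth \<phi> (m+k)) = 0)"

end

theory Submission
  imports Defs
begin

unbundle fps_syntax

text \<open>The symplectic sum of index \<open>m = d + 1\<close> is the coefficient of \<open>x\<^sup>2\<^sup>d\<^sup>+\<^sup>1\<close>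
  in \<open>(x - 1)\<^sup>d \<phi>\<close>. For \<open>\<phi> = x\<^sup>2\<^sup>n / (1 - x)\<^sup>n\<close> this product is \<open>0\<close> beyond degree \<open>2d\<close>:
  if \<open>n > d\<close> the factor \<open>x\<^sup>2\<^sup>n\<close> alone pushes everything past \<open>x\<^sup>2\<^sup>d\<^sup>+\<^sup>1\<close>, and if \<open>n \<le> d\<close> the
  denominator cancels, leaving \<open>\<plusminus>x\<^sup>2\<^sup>n (x - 1)\<^sup>d\<^sup>-\<^sup>n\<close>, a polynomial of degree \<open>d + n \<le> 2d\<close>.\<close>

lemma fps_nth_X_minus_1_power:
  "(fps_X - 1 :: 'a :: comm_ring_1 fps) ^ d $ i =
     (if i \<le> d then (-1) ^ (d - i) * of_nat (d choose i) else 0)"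
proof -
  have "(fps_X - 1 :: 'a fps) ^ d = (\<Sum>k\<le>d. of_nat (d choose k) * fps_X ^ k * (-1) ^ (d - k))"
    using binomial_ring[of fps_X "-1 :: 'a fps" d] by simp
  also have "\<dots> = (\<Sum>k\<le>d. fps_const ((-1) ^ (d - k) * of_nat (d choose k)) * fps_X ^ k)"
    by (intro sum.cong refl) (simp add: fps_of_nat mult_ac flip: fps_const_neg fps_const_power fps_const_mult)
  finally show ?thesis
    by (simp add: fps_sum_nth if_distrib cong: if_cong)
qed

lemma fps_nth_mult_eq_0_beyond:
  fixes f g :: "'a :: comm_semiring_0 fps"
  assumes "\<And>j. j > a \<Longrightarrow> f $ j = 0" and "\<And>j. j > b \<Longrightarrow> g $ j = 0" and "j > a + b"
  shows "(f * g) $ j = 0"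
  unfolding fps_mult_nth
proof (rule sum.neutral, intro ballI)
  fix i assume "i \<in> {0..j}"
  show "f $ i * g $ (j - i) = 0"
  proof (cases "i > a")
    case False
    then have "j - i > b" using assms(3) by linarith
    then show ?thesis using assms(2) by simp
  qed (use assms(1) in simp)
qed

lemma symplectic_sum_eq_fps_nth:
  fixes \<phi> :: "'a :: comm_ring_1 fps"
  shows "(\<Sum>k = 0..d. (-1) ^ k * of_nat (d choose k) * \<phi> $ (d + 1 + k)) =
         ((fps_X - 1) ^ d * \<phi>) $ (2 * d + 1)"
proof -
  have "((fps_X - 1) ^ d * \<phi>) $ (2 * d + 1) =
        (\<Sum>i = 0..d. (fps_X - 1 :: 'a fps) ^ d $ i * \<phi> $ (2 * d + 1 - i))"
    unfolding fps_mult_nth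
    by (rule sum.mono_neutral_right) (auto simp: fps_nth_X_minus_1_power)
  also have "\<dots> = (\<Sum>k = 0..d. (fps_X - 1 :: 'a fps) ^ d $ (d - k) * \<phi> $ (d + 1 + k))"
    by (rule sum.reindex_bij_witness[of _ "\<lambda>k. d - k" "\<lambda>i. d - i"])
      (auto simp: mult_2 Suc_diff_le)
  also have "\<dots> = (\<Sum>k = 0..d. (-1) ^ k * of_nat (d choose k) * \<phi> $ (d + 1 + k))"
  proof (rule sum.cong)
    fix k assume "k \<in> {0..d}"
    then show "(fps_X - 1 :: 'a fps) ^ d $ (d - k) * \<phi> $ (d + 1 + k) =
               (-1) ^ k * of_nat (d choose k) * \<phi> $ (d + 1 + k)"
      by (simp add: fps_nth_X_minus_1_power binomial_symmetric [of k d])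
  qed simp
  finally show ?thesis ..
qed

lemma symplectic_iff_fps_nth:
  "symplectic \<phi> \<longleftrightarrow> (\<forall>d. ((fps_X - 1) ^ d * \<phi>) $ (2 * d + 1) = 0)"
  unfolding symplectic_def
proof (intro iffI allI impI)
  fix d
  assume "\<forall>m\<ge>1. (\<Sum>k = 0..m - 1. (-1) ^ k * of_nat (m - 1 choose k) * \<phi> $ (m + k)) = 0"
  then show "((fps_X - 1) ^ d * \<phi>) $ (2 * d + 1) = 0"
    using symplectic_sum_eq_fps_nth [of d \<phi>] by (auto dest: spec [of _ "Suc d"])
next
  fix m :: nat
  assume "\<forall>d. ((fps_X - 1) ^ d * \<phi>) $ (2 * d + 1) = 0" and "m \<ge> 1"
  moreover obtain d where "m = Suc d"
    using \<open>m \<ge> 1\<close> by (cases m) auto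
  ultimately show "(\<Sum>k = 0..m - 1. (-1) ^ k * of_nat (m - 1 choose k) * \<phi> $ (m + k)) = 0"
    using symplectic_sum_eq_fps_nth [of d \<phi>] by simp
qed

lemma fps_X_square_div_power:
  "(fps_X ^ 2 / (1 - fps_X :: 'a :: field fps)) ^ n = fps_X ^ (2 * n) * inverse (1 - fps_X) ^ n"
  by (simp add: fps_divide_unit power_mult_distrib power_mult)

lemma X_minus_1_power_mult_X_square_div_power:
  assumes "n \<le> d"
  shows "(fps_X - 1) ^ d * (fps_X ^ 2 / (1 - fps_X :: 'a :: field fps)) ^ n =
         fps_X ^ (2 * n) * (fps_const ((-1) ^ n) * (fps_X - 1) ^ (d - n))"
proof -
  have "(fps_X - 1) * inverse (1 - fps_X :: 'a fps) = -1"
    using inverse_mult_eq_1' [of "1 - fps_X :: 'a fps"] by (simp add: algebra_simps)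
  moreover have "(fps_X - 1) ^ d * (fps_X ^ 2 / (1 - fps_X :: 'a fps)) ^ n =
      fps_X ^ (2 * n) * ((fps_X - 1) ^ (d - n) * ((fps_X - 1) * inverse (1 - fps_X)) ^ n)"
    using assms by (simp add: fps_X_square_div_power power_mult_distrib mult_ac flip: power_add)
  ultimately show ?thesis
    by (simp flip: fps_const_power fps_const_neg)
qed

theorem lemma2p1:
  fixes n :: nat
  shows "symplectic ((fps_X ^ 2 / (1 - fps_X)) ^ n)"
  unfolding symplectic_iff_fps_nth
proof
  fix d
  show "((fps_X - 1) ^ d * (fps_X ^ 2 / (1 - fps_X)) ^ n) $ (2 * d + 1) = (0 :: complex)"
  proof (cases "n \<le> d")
    case True
    show ?thesis
      unfolding X_minus_1_power_mult_X_square_div_power [OF True]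
      by (rule fps_nth_mult_eq_0_beyond [where a = "2 * n" and b = "d - n"])
        (use True in \<open>auto simp: fps_nth_X_minus_1_power\<close>)
  next
    case False
    then show ?thesis
      by (simp add: fps_X_square_div_power mult.left_commute [of _ "fps_X ^ (2 * n)"]
          fps_X_power_mult_nth)
  qed
qed

end
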